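(* Let $\phi(x)=\psi_0(\psi_1(x),\dots,\psi_n(x))$ where $\psi_0(y_1,\dots,y_n)$ is an IPC formula in which each $y_i$ is negative, and each $\psi_i$ ($1\le i\le n$) is an IPC formula in which $x$ is negative (formulas may contain further parameter variables). Then for every Heyting algebra $H$ and valuation $v$ of the parameters, the map $F(h)=[\![\phi]\!]_{(v,h/x)}$ satisfies $F^{n+2}(\bot)=F^{n+1}(\bot)$, i.e. $F^{n+1}(\bot)$ is the least fixed point of $F$.
   Context: An occurrence of a variable is negative in a formula if the path in the syntax tree from the root to it passes through an odd number of nodes labelled by an implication $\chi_1\to\chi_2$ whose successor on the path is $\chi_1$; a variable is negative in a formula if all its occurrences are negative. $(v,h/x)$ extends $v$ by sending $x$ to $h$. *)

theory Defs
  imports Main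
begin

class heyting_algebra = bounded_lattice +
  fixes himp :: "'a \<Rightarrow> 'a \<Rightarrow> 'a"
  assumes himp_residuation: "inf a b \<le> c \<longleftrightarrow> a \<le> himp b c"

datatype 'v form =
    Var 'v
  | Bot
  | Top
  | Conj "'v form" "'v form"
  | Disj "'v form" "'v form"
  | Imp "'v form" "'v form"

primrec vars :: "'v form \<Rightarrow> 'v set" where
  "vars (Var y) = {y}"
| "vars Bot = {}"
| "vars Top = {}"
| "vars (Conj a b) = vars a \<union> vars b"
| "vars (Disj a b) = vars a \<union> vars b"
| "vars (Imp a b) = vars a \<union> vars b"

fun pos_occ :: "'v form \<Rightarrow> 'v \<Rightarrow> bool"
and neg_occ :: "'v form \<Rightarrow> 'v \<Rightarrow> bool" where
  "pos_occ (Var y) x = (x = y)"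
| "pos_occ Bot x = False"
| "pos_occ Top x = False"
| "pos_occ (Conj a b) x = (pos_occ a x \<or> pos_occ b x)"
| "pos_occ (Disj a b) x = (pos_occ a x \<or> pos_occ b x)"
| "pos_occ (Imp a b) x = (neg_occ a x \<or> pos_occ b x)"
| "neg_occ (Var y) x = False"
| "neg_occ Bot x = False"
| "neg_occ Top x = False"
| "neg_occ (Conj a b) x = (neg_occ a x \<or> neg_occ b x)"
| "neg_occ (Disj a b) x = (neg_occ a x \<or> neg_occ b x)"
| "neg_occ (Imp a b) x = (pos_occ a x \<or> neg_occ b x)"

definition negative_in :: "'v \<Rightarrow> 'v form \<Rightarrow> bool" where
  "negative_in x phi \<longleftrightarrow> \<not> pos_occ phi x"

primrec subst :: "('v \<Rightarrow> 'w form) \<Rightarrow> 'v form \<Rightarrow> 'w form" where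
  "subst s (Var y) = s y"
| "subst s Bot = Bot"
| "subst s Top = Top"
| "subst s (Conj a b) = Conj (subst s a) (subst s b)"
| "subst s (Disj a b) = Disj (subst s a) (subst s b)"
| "subst s (Imp a b) = Imp (subst s a) (subst s b)"

primrec eval :: "('v \<Rightarrow> 'a::heyting_algebra) \<Rightarrow> 'v form \<Rightarrow> 'a" where
  "eval v (Var y) = v y"
| "eval v Bot = bot"
| "eval v Top = top"
| "eval v (Conj a b) = inf (eval v a) (eval v b)"
| "eval v (Disj a b) = sup (eval v a) (eval v b)"
| "eval v (Imp a b) = himp (eval v a) (eval v b)"

text \<open>Composition psi0(psi1,...,psin): psi0 has variables Inl p (parameters p)
  and Inr i (the variable y_i); each psi_i has variables Some p (parameters) and
  None (the variable x).\<close>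
definition compose :: "('p + nat) form \<Rightarrow> (nat \<Rightarrow> 'p option form) \<Rightarrow> 'p option form" where
  "compose psi0 psi = subst (\<lambda>u. case u of Inl p \<Rightarrow> Var (Some p) | Inr i \<Rightarrow> psi i) psi0"

text \<open>The valuation (v, h/x), where x is represented by None.\<close>
definition extend_val :: "('p \<Rightarrow> 'a) \<Rightarrow> 'a \<Rightarrow> 'p option \<Rightarrow> 'a" where
  "extend_val v h = case_option h v"

end

theory Submission
  imports Defs
begin

text \<open>The approximants \<open>a\<^sub>k = F\<^sup>k(\<bottom>)\<close> increase, so the values \<open>\<psi>\<^sub>i(a\<^sub>k)\<close> decrease.
  In a Heyting algebra every formula respects equality relative to an element \<open>c\<close>
  (\<open>c \<sqinter> x \<le> y\<close> and \<open>c \<sqinter> y \<le> x\<close>).  Relative to \<open>a\<^sub>k\<^sub>+\<^sub>2\<close>, the step from \<open>a\<^sub>k\<^sub>+\<^sub>1\<close> to \<open>a\<^sub>k\<^sub>+\<^sub>2\<close>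
  can only be caused by some \<open>\<psi>\<^sub>i(a\<^sub>k\<^sub>+\<^sub>1)\<close> dropping strictly below \<open>\<psi>\<^sub>i(a\<^sub>k)\<close>, which in
  turn is caused by an earlier step, relative to \<open>\<psi>\<^sub>i(a\<^sub>k)\<close>.  Each such descent adds one
  more \<open>\<psi>\<^sub>i\<close> to the context; once all \<open>n\<close> of them are used the context forces
  all \<open>\<psi>\<^sub>i\<close> to agree, so after \<open>n + 1\<close> iterations no step remains.\<close>

context heyting_algebra
begin

lemma inf_himp_le: "inf a (himp a b) \<le> b"
  using himp_residuation[of "himp a b" a b] by (simp add: inf_commute)

lemma le_himpI: "inf x a \<le> b \<Longrightarrow> x \<le> himp a b"
  using himp_residuation by blast

lemma himp_antimono_mono:
  assumes "a' \<le> a" and "b \<le> b'"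
  shows "himp a b \<le> himp a' b'"
proof (rule le_himpI)
  have "inf (himp a b) a' \<le> inf a (himp a b)"
    using assms(1) by (simp add: le_infI2)
  also have "\<dots> \<le> b'"
    using inf_himp_le assms(2) by (rule order_trans)
  finally show "inf (himp a b) a' \<le> b'" .
qed

lemma inf_sup_distrib_le: "inf c (sup a b) \<le> sup (inf c a) (inf c b)"
proof -
  have "sup a b \<le> himp c (sup (inf c a) (inf c b))"
    by (intro sup_least le_himpI) (simp_all add: inf_commute)
  then show ?thesis
    using himp_residuation[of "sup a b" c] by (simp add: inf_commute)
qed

definition eq_under :: "'a \<Rightarrow> 'a \<Rightarrow> 'a \<Rightarrow> bool" where
  "eq_under c x y \<longleftrightarrow> inf c x \<le> y \<and> inf c y \<le> x"

lemma eq_under_refl: "eq_under c x x"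
  by (simp add: eq_under_def)

lemma inf_inf_le_inf:
  assumes "inf c x \<le> x'" and "inf c y \<le> y'"
  shows "inf c (inf x y) \<le> inf x' y'"
proof -
  have "inf c (inf x y) = inf (inf c x) (inf c y)"
    by (simp add: inf_sup_aci)
  also have "\<dots> \<le> inf x' y'"
    using assms by (rule inf_mono)
  finally show ?thesis .
qed

lemma eq_under_inf:
  "eq_under c x x' \<Longrightarrow> eq_under c y y' \<Longrightarrow> eq_under c (inf x y) (inf x' y')"
  unfolding eq_under_def by (blast intro: inf_inf_le_inf)

lemma eq_under_sup:
  "eq_under c x x' \<Longrightarrow> eq_under c y y' \<Longrightarrow> eq_under c (sup x y) (sup x' y')"
  unfolding eq_under_def by (meson inf_sup_distrib_le order_trans sup_mono)

lemma eq_under_himp: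
  assumes "eq_under c x x'" and "eq_under c y y'"
  shows "eq_under c (himp x y) (himp x' y')"
proof -
  have "inf c (himp x y) \<le> himp x' y'" if "inf c x' \<le> x" "inf c y \<le> y'" for x y x' y'
  proof (rule le_himpI)
    have "inf c (inf x' (himp x y)) \<le> inf x (himp x y)"
      using that(1) inf.cobounded2 by (rule inf_inf_le_inf)
    then have "inf c (inf x' (himp x y)) \<le> y"
      using inf_himp_le by (rule order_trans)
    then have "inf c (inf x' (himp x y)) \<le> inf c y"
      by simp
    then have "inf c (inf x' (himp x y)) \<le> y'"
      using that(2) by (rule order_trans)
    then show "inf (inf c (himp x y)) x' \<le> y'"
      by (simp add: inf_sup_aci)
  qed
  then show ?thesis
    using assms unfolding eq_under_def by blast
qed

end

lemma funpow_bot_le_fixpoint: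
  fixes f :: "'a::order_bot \<Rightarrow> 'a"
  assumes "mono f" and "f x = x"
  shows "(f ^^ k) bot \<le> x"
proof (induction k)
  case (Suc k)
  then show ?case
    using monoD[OF assms(1) Suc.IH] assms(2) by simp
qed simp

locale antitone_composition =
  fixes n :: nat
    and G :: "(nat \<Rightarrow> 'a::heyting_algebra) \<Rightarrow> 'a"
    and g :: "nat \<Rightarrow> 'a \<Rightarrow> 'a"
  assumes G_antitone: "(\<And>i. i \<in> {1..n} \<Longrightarrow> u i \<le> u' i) \<Longrightarrow> G u' \<le> G u"
    and G_eq_under: "(\<And>i. i \<in> {1..n} \<Longrightarrow> eq_under c (u i) (u' i)) \<Longrightarrow> eq_under c (G u) (G u')"
    and g_antitone: "i \<in> {1..n} \<Longrightarrow> h \<le> h' \<Longrightarrow> g i h' \<le> g i h"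
    and g_eq_under: "eq_under c h h' \<Longrightarrow> eq_under c (g i h) (g i h')"
begin

definition F :: "'a \<Rightarrow> 'a" where
  "F h = G (\<lambda>i. g i h)"

abbreviation approx :: "nat \<Rightarrow> 'a" where
  "approx k \<equiv> (F ^^ k) bot"

lemma mono_F: "mono F"
  unfolding F_def by (intro monoI G_antitone g_antitone)

lemma approx_le_Suc: "approx k \<le> approx (Suc k)"
  using funpow_decreasing[of k "Suc k" F] mono_F by simp

lemma approx_Suc: "approx (Suc k) = G (\<lambda>i. g i (approx k))"
  by (simp add: F_def)

lemma g_approx_Suc_le: "i \<in> {1..n} \<Longrightarrow> g i (approx (Suc k)) \<le> g i (approx k)"
  using g_antitone approx_le_Suc by blast

text \<open>The indices in \<open>S\<close> already agree relative to \<open>c\<close>; for every other index the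
  hypothesis rules out an earlier step relative to \<open>g i (approx k)\<close>.\<close>

lemma approx_step:
  assumes S: "\<And>i. i \<in> S \<Longrightarrow> c \<le> g i (approx (Suc k))"
    and rest: "\<And>i. i \<in> {1..n} - S \<Longrightarrow>
      inf (inf (inf (approx (k + 2)) c) (g i (approx k))) (approx (Suc k)) \<le> approx k"
  shows "inf (approx (k + 2)) c \<le> approx (Suc k)"
proof -
  define c' where "c' = inf (approx (k + 2)) c"
  have "eq_under c' (g i (approx (Suc k))) (g i (approx k))" if i: "i \<in> {1..n}" for i
  proof -
    have "inf c' (g i (approx k)) \<le> g i (approx (Suc k))"
    proof (cases "i \<in> S")
      case True
      have "inf c' (g i (approx k)) \<le> c"
        unfolding c'_def by (intro inf.coboundedI1 inf.cobounded2)
      then show ?thesis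
        using S[OF True] by (rule order_trans)
    next
      case False
      define c'' where "c'' = inf c' (g i (approx k))"
      have "eq_under c'' (approx k) (approx (Suc k))"
        unfolding eq_under_def c''_def c'_def
        using approx_le_Suc rest[of i] i False by (auto intro: inf.coboundedI2)
      then have "inf c'' (g i (approx k)) \<le> g i (approx (Suc k))"
        using g_eq_under unfolding eq_under_def by blast
      then show ?thesis
        by (simp add: c''_def)
    qed
    then show ?thesis
      unfolding eq_under_def using g_approx_Suc_le[OF i] by (auto intro: inf.coboundedI2)
  qed
  then have "eq_under c' (approx (k + 2)) (approx (Suc k))"
    using G_eq_under by (simp add: approx_Suc del: funpow.simps)
  then have "inf c' (approx (k + 2)) \<le> approx (Suc k)"
    unfolding eq_under_def by blast
  moreover have "inf c' (approx (k + 2)) = inf (approx (k + 2)) c"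
    unfolding c'_def by (simp add: inf_sup_aci)
  ultimately show ?thesis
    by simp
qed

lemma approx_descent:
  assumes "S \<subseteq> {1..n}" and "n \<le> card S + k"
    and "\<And>i. i \<in> S \<Longrightarrow> c \<le> g i (approx (Suc k))"
  shows "inf (approx (k + 2)) c \<le> approx (Suc k)"
  using assms
proof (induction k arbitrary: S c)
  case 0
  then have "S = {1..n}"
    by (metis add_0_right card_atLeastAtMost card_seteq diff_Suc_1 finite_atLeastAtMost)
  then show ?case
    using approx_step[of S c 0] "0.prems"(3) by blast
next
  case (Suc k)
  show ?case
  proof (rule approx_step[of S])
    show "c \<le> g i (approx (Suc (Suc k)))" if "i \<in> S" for i
      using Suc.prems(3) that .
    fix i assume i: "i \<in> {1..n} - S"
    have "inf (approx (k + 2)) (inf (g i (approx (Suc k))) c) \<le> approx (Suc k)"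
    proof (rule Suc.IH)
      show "insert i S \<subseteq> {1..n}"
        using Suc.prems(1) i by auto
      show "n \<le> card (insert i S) + k"
        using Suc.prems(1,2) i finite_subset[of S "{1..n}"] by simp
      show "inf (g i (approx (Suc k))) c \<le> g j (approx (Suc k))" if "j \<in> insert i S" for j
      proof (cases "j = i")
        case False
        then have j: "j \<in> S"
          using that by simp
        then have "g j (approx (Suc (Suc k))) \<le> g j (approx (Suc k))"
          using Suc.prems(1) g_approx_Suc_le by blast
        with Suc.prems(3)[OF j] have "c \<le> g j (approx (Suc k))"
          by (rule order_trans)
        then show ?thesis
          by (rule inf.coboundedI2)
      qed simp
    qed
    moreover have "inf (inf (inf (approx (Suc k + 2)) c) (g i (approx (Suc k)))) (approx (Suc (Suc k)))
        \<le> inf (approx (k + 2)) (inf (g i (approx (Suc k))) c)"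
      by (simp add: inf.coboundedI1 inf.coboundedI2 le_infI)
    ultimately show "inf (inf (inf (approx (Suc k + 2)) c) (g i (approx (Suc k)))) (approx (Suc (Suc k)))
        \<le> approx (Suc k)"
      by (rule order_trans[rotated])
  qed
qed

theorem approx_stabilises: "approx (n + 2) = approx (n + 1)"
  using approx_descent[of "{}" n top] approx_le_Suc[of "n + 1"] by simp

theorem approx_least_fixpoint: "F x = x \<Longrightarrow> approx k \<le> x"
  using funpow_bot_le_fixpoint[OF mono_F] .

end

lemma vars_if_occ: "pos_occ t x \<Longrightarrow> x \<in> vars t" "neg_occ t x \<Longrightarrow> x \<in> vars t"
  by (induction t) auto

lemma eval_subst: "eval w (subst s t) = eval (\<lambda>u. eval w (s u)) t"
  by (induction t) auto

lemma eval_compose: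
  "eval (extend_val v h) (compose psi0 psi)
     = eval (case_sum v (\<lambda>i. eval (extend_val v h) (psi i))) psi0"
  unfolding compose_def eval_subst
  by (rule arg_cong[where f = "\<lambda>f. eval f psi0"]) (auto simp: extend_val_def split: sum.split)

lemma eval_eq_under:
  "(\<And>x. x \<in> vars t \<Longrightarrow> eq_under c (v x) (w x)) \<Longrightarrow> eq_under c (eval v t) (eval w t)"
  by (induction t) (simp_all add: eq_under_refl eq_under_inf eq_under_sup eq_under_himp)

lemma eval_mono:
  fixes v w :: "'v \<Rightarrow> 'a::heyting_algebra"
  assumes "\<And>x. pos_occ t x \<Longrightarrow> v x \<le> w x" and "\<And>x. neg_occ t x \<Longrightarrow> w x \<le> v x"
  shows "eval v t \<le> eval w t"
  using assms
proof (induction t arbitrary: v w)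
  case (Conj a b)
  have "eval v a \<le> eval w a" "eval v b \<le> eval w b"
    using Conj.prems by (auto intro!: Conj.IH)
  then show ?case
    unfolding eval.simps by (rule inf_mono)
next
  case (Disj a b)
  have "eval v a \<le> eval w a" "eval v b \<le> eval w b"
    using Disj.prems by (auto intro!: Disj.IH)
  then show ?case
    unfolding eval.simps by (rule sup_mono)
next
  case (Imp a b)
  have "eval w a \<le> eval v a" "eval v b \<le> eval w b"
    using Imp.prems by (auto intro!: Imp.IH)
  then show ?case
    unfolding eval.simps by (rule himp_antimono_mono)
qed simp_all

lemma eval_antitone_negative:
  fixes v w :: "'v \<Rightarrow> 'a::heyting_algebra"
  assumes "\<And>x. x \<in> vars t \<Longrightarrow> v x = w x \<or> negative_in x t \<and> w x \<le> v x"
  shows "eval v t \<le> eval w t"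
  using assms vars_if_occ by (intro eval_mono) (fastforce simp: negative_in_def)+

lemma antitone_composition_eval:
  fixes psi0 :: "('p + nat) form"
    and psi :: "nat \<Rightarrow> 'p option form"
    and v :: "'p \<Rightarrow> 'a::heyting_algebra"
  assumes y_range: "\<And>i. Inr i \<in> vars psi0 \<Longrightarrow> 1 \<le> i \<and> i \<le> n"
    and y_neg: "\<And>i. 1 \<le> i \<Longrightarrow> i \<le> n \<Longrightarrow> negative_in (Inr i) psi0"
    and x_neg: "\<And>i. 1 \<le> i \<Longrightarrow> i \<le> n \<Longrightarrow> negative_in None (psi i)"
  shows "antitone_composition n (\<lambda>u. eval (case_sum v u) psi0) (\<lambda>i h. eval (extend_val v h) (psi i))"
proof
  fix c and u u' :: "nat \<Rightarrow> 'a"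
  show "eval (case_sum v u') psi0 \<le> eval (case_sum v u) psi0"
    if "\<And>i. i \<in> {1..n} \<Longrightarrow> u i \<le> u' i"
  proof (rule eval_antitone_negative)
    fix x assume "x \<in> vars psi0"
    then show "case_sum v u' x = case_sum v u x
        \<or> negative_in x psi0 \<and> case_sum v u x \<le> case_sum v u' x"
      using that y_range y_neg by (cases x) auto
  qed
  show "eq_under c (eval (case_sum v u) psi0) (eval (case_sum v u') psi0)"
    if "\<And>i. i \<in> {1..n} \<Longrightarrow> eq_under c (u i) (u' i)"
  proof (rule eval_eq_under)
    fix x assume "x \<in> vars psi0"
    then show "eq_under c (case_sum v u x) (case_sum v u' x)"
      using that y_range by (cases x) (auto simp: eq_under_refl)
  qed
next
  fix c i and h h' :: 'a
  show "eval (extend_val v h') (psi i) \<le> eval (extend_val v h) (psi i)"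
    if "i \<in> {1..n}" "h \<le> h'"
    using that x_neg
    by (intro eval_antitone_negative) (auto simp: extend_val_def split: option.split)
  show "eq_under c (eval (extend_val v h) (psi i)) (eval (extend_val v h') (psi i))"
    if "eq_under c h h'"
    using that
    by (intro eval_eq_under) (auto simp: eq_under_refl extend_val_def split: option.split)
qed

theorem mainTheorem17:
  fixes psi0 :: "('p + nat) form"
    and psi :: "nat \<Rightarrow> 'p option form"
    and n :: nat
    and v :: "'p \<Rightarrow> 'a::heyting_algebra"
  assumes y_range: "\<And>i. Inr i \<in> vars psi0 \<Longrightarrow> 1 \<le> i \<and> i \<le> n"
    and y_neg: "\<And>i. 1 \<le> i \<Longrightarrow> i \<le> n \<Longrightarrow> negative_in (Inr i) psi0"
    and x_neg: "\<And>i. 1 \<le> i \<Longrightarrow> i \<le> n \<Longrightarrow> negative_in None (psi i)"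
  shows "let F = (\<lambda>h. eval (extend_val v h) (compose psi0 psi))
         in (F ^^ (n + 2)) bot = (F ^^ (n + 1)) bot
            \<and> F ((F ^^ (n + 1)) bot) = (F ^^ (n + 1)) bot
            \<and> (\<forall>b. F b = b \<longrightarrow> (F ^^ (n + 1)) bot \<le> b)"
proof -
  interpret antitone_composition n "\<lambda>u. eval (case_sum v u) psi0"
      "\<lambda>i h. eval (extend_val v h) (psi i)"
    using assms by (rule antitone_composition_eval)
  have F_eq: "(\<lambda>h. eval (extend_val v h) (compose psi0 psi)) = F"
    by (simp add: fun_eq_iff F_def eval_compose)
  have fixpoint: "F (approx (n + 1)) = approx (n + 1)"
    using approx_stabilises by simp
  have least: "\<forall>b. F b = b \<longrightarrow> approx (n + 1) \<le> b"
    using approx_least_fixpoint by blast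
  show ?thesis
    unfolding F_eq Let_def using approx_stabilises fixpoint least by (intro conjI)
qed

end
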